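(* For $t\in[0,1]$ and $x\ge 0$ define \[ f_t(x)=(1-t)\int_0^{1}x^{t\alpha}\,d\alpha+t\,x^{t}\int_0^{1}x^{(1-t)\alpha}\,d\alpha \] (with the convention $0^0=1$). Then for all $x\ge 0$ and all $t\in[0,1]$, \[ x^t\le f_t(x)\le \tfrac12\left(x^t+1-t+tx\right). \]
   Context: For $t\in(0,1)$ and $x>0$, $x\neq1$, one has $f_t(x)=\frac{1}{\log x}\left(\frac{1-t}{t}(x^t-1)+\frac{t}{1-t}x^t(x^{1-t}-1)\right)$; $f_t$ is the representing function of the weighted logarithmic mean. *)

theory Defs
  imports "HOL-Analysis.Analysis"
begin

text \<open>Real power with the convention 0^0 = 1 (for x \<ge> 0): powr already gives
  x powr a for x > 0, and 0 powr a = 0; we override the exponent-0 case.\<close>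
definition pw :: "real \<Rightarrow> real \<Rightarrow> real" where
  "pw x a = (if a = 0 then 1 else x powr a)"

definition f_t :: "real \<Rightarrow> real \<Rightarrow> real" where
  "f_t t x = (1 - t) * integral {0..1} (\<lambda>\<alpha>. pw x (t * \<alpha>))
             + t * pw x t * integral {0..1} (\<lambda>\<alpha>. pw x ((1 - t) * \<alpha>))"

end

theory Submission
  imports Defs
begin

text \<open>For \<open>x > 0\<close> both integrals in \<open>f_t t x\<close> are averages of \<open>\<alpha> \<mapsto> exp (c \<alpha>)\<close> over \<open>[0,1]\<close>,
  with \<open>c = t ln x\<close> and \<open>c = (1 - t) ln x\<close>. Convexity of \<open>exp\<close> bounds such an average above
  by \<open>(1 + exp c) / 2\<close> (chord), and tangent lines at \<open>\<alpha> = 1\<close> resp. \<open>\<alpha> = 0\<close> bound the two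
  averages below by \<open>x\<^sup>t (1 - t ln x / 2)\<close> and \<open>1 + (1 - t) ln x / 2\<close>; weighting with
  \<open>1 - t\<close> and \<open>t x\<^sup>t\<close>, the \<open>ln x\<close> terms cancel and leave exactly \<open>x\<^sup>t\<close>.\<close>

definition exp_average :: "real \<Rightarrow> real" where
  "exp_average c = integral {0..1} (\<lambda>\<alpha>. exp (c * \<alpha>))"

lemma integral_unit_interval_linear: "integral {0..1} (\<lambda>\<alpha>::real. p + q * \<alpha>) = p + q / 2"
proof -
  have "((\<lambda>\<alpha>::real. p + q * \<alpha>) has_integral ((p * 1 + q * 1\<^sup>2 / 2) - (p * 0 + q * 0\<^sup>2 / 2))) {0..1}"
  proof (rule fundamental_theorem_of_calculus)
    fix \<alpha> :: real
    have "((\<lambda>\<alpha>. p * \<alpha> + q * \<alpha>\<^sup>2 / 2) has_real_derivative (p + q * \<alpha>)) (at \<alpha> within {0..1})"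
      by (auto intro!: derivative_eq_intros)
    then show "((\<lambda>\<alpha>. p * \<alpha> + q * \<alpha>\<^sup>2 / 2) has_vector_derivative (p + q * \<alpha>)) (at \<alpha> within {0..1})"
      by (simp add: has_real_derivative_iff_has_vector_derivative)
  qed simp
  then show ?thesis
    by (simp add: integral_unique)
qed

lemma exp_average_le_linear:
  assumes "\<And>\<alpha>. \<alpha> \<in> {0..1} \<Longrightarrow> exp (c * \<alpha>) \<le> p + q * \<alpha>"
  shows "exp_average c \<le> p + q / 2"
proof -
  have "exp_average c \<le> integral {0..1} (\<lambda>\<alpha>::real. p + q * \<alpha>)"
    unfolding exp_average_def
    by (intro integral_le integrable_continuous_interval continuous_intros assms)
  then show ?thesis
    by (simp add: integral_unit_interval_linear)
qed

lemma exp_average_ge_linear: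
  assumes "\<And>\<alpha>. \<alpha> \<in> {0..1} \<Longrightarrow> p + q * \<alpha> \<le> exp (c * \<alpha>)"
  shows "p + q / 2 \<le> exp_average c"
proof -
  have "integral {0..1} (\<lambda>\<alpha>::real. p + q * \<alpha>) \<le> exp_average c"
    unfolding exp_average_def
    by (intro integral_le integrable_continuous_interval continuous_intros assms)
  then show ?thesis
    by (simp add: integral_unit_interval_linear)
qed

lemma exp_average_le: "exp_average c \<le> (1 + exp c) / 2"
proof -
  have "exp (c * \<alpha>) \<le> 1 + (exp c - 1) * \<alpha>" if "\<alpha> \<in> {0..1}" for \<alpha>
    using that convex_onD[OF exp_convex, of \<alpha> 0 c] by (simp add: algebra_simps)
  then have "exp_average c \<le> 1 + (exp c - 1) / 2"
    by (rule exp_average_le_linear)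
  then show ?thesis
    by (simp add: field_simps)
qed

lemma exp_average_ge_tangent_at_0: "1 + c / 2 \<le> exp_average c"
  by (rule exp_average_ge_linear) (use exp_ge_add_one_self in auto)

lemma exp_average_ge_tangent_at_1: "exp c * (1 - c / 2) \<le> exp_average c"
proof -
  have "exp c * (1 - c) + exp c * c * \<alpha> \<le> exp (c * \<alpha>)" for \<alpha>
  proof -
    have "exp c * (1 + c * (\<alpha> - 1)) \<le> exp c * exp (c * (\<alpha> - 1))"
      by (rule mult_left_mono) auto
    also have "\<dots> = exp (c * \<alpha>)"
      by (simp add: mult_exp_exp algebra_simps)
    finally show ?thesis
      by (simp add: algebra_simps)
  qed
  then have "exp c * (1 - c) + exp c * c / 2 \<le> exp_average c"
    by (rule exp_average_ge_linear)
  then show ?thesis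
    by (simp add: algebra_simps)
qed

lemma pw_eq_exp: "0 < x \<Longrightarrow> pw x a = exp (a * ln x)"
  by (simp add: pw_def powr_def)

lemma f_t_eq_exp_average:
  assumes "0 < x"
  shows "f_t t x = (1 - t) * exp_average (t * ln x)
                    + t * exp (t * ln x) * exp_average ((1 - t) * ln x)"
  using assms by (simp add: f_t_def exp_average_def pw_eq_exp ac_simps)

lemma f_t_zero: "f_t t 0 = (if t = 0 then 1 else 0)"
proof (cases "t = 0")
  case False
  have "((\<lambda>\<alpha>. pw 0 (t * \<alpha>)) has_integral 0) {0..1::real}"
    by (rule has_integral_spike[OF negligible_sing _ has_integral_0[of "{0..1}"]])
      (use False in \<open>auto simp: pw_def\<close>)
  then show ?thesis
    using False by (simp add: f_t_def integral_unique pw_def)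
qed (simp add: f_t_def pw_def)

theorem lemma2p3:
  fixes x t :: real
  assumes "0 \<le> x" and "0 \<le> t" and "t \<le> 1"
  shows "pw x t \<le> f_t t x \<and> f_t t x \<le> (pw x t + 1 - t + t * x) / 2"
proof (cases "x = 0")
  case True
  then show ?thesis
    using assms by (simp add: f_t_zero pw_def)
next
  case False
  then have "0 < x"
    using assms(1) by simp
  define L where "L = ln x"
  define a where "a = exp (t * L)"
  have a_pos: "0 < a" and x_eq: "x = a * exp ((1 - t) * L)"
    using \<open>0 < x\<close> by (simp_all add: a_def L_def mult_exp_exp algebra_simps)
  have f: "f_t t x = (1 - t) * exp_average (t * L) + t * a * exp_average ((1 - t) * L)"
    and pw: "pw x t = a"
    using \<open>0 < x\<close> by (simp_all add: f_t_eq_exp_average pw_eq_exp a_def L_def)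
  have "pw x t = (1 - t) * (a * (1 - t * L / 2)) + t * a * (1 + (1 - t) * L / 2)"
    by (simp add: pw algebra_simps)
  also have "\<dots> \<le> f_t t x"
    unfolding f
    using assms a_pos exp_average_ge_tangent_at_1[of "t * L"]
      exp_average_ge_tangent_at_0[of "(1 - t) * L"]
    by (intro add_mono mult_left_mono) (auto simp: a_def)
  finally have lower: "pw x t \<le> f_t t x" .
  have "f_t t x \<le> (1 - t) * ((1 + a) / 2) + t * a * ((1 + exp ((1 - t) * L)) / 2)"
    unfolding f
    using assms a_pos exp_average_le[of "t * L"] exp_average_le[of "(1 - t) * L"]
    by (intro add_mono mult_left_mono) (auto simp: a_def)
  also have "\<dots> = (pw x t + 1 - t + t * x) / 2"
    unfolding pw by (simp add: x_eq field_simps)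
  finally show ?thesis
    using lower by simp
qed

end
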